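(* Let $V=\{v_0,\dots,v_{L-1}\}$ be a set of $L\ge1$ boolean variables and let $n_0,\dots,n_t$ ($t\ge1$) be a sequence of nodes, node $n_j$ carrying a state $s_j:V\to\{0,1\}$. Let $n^c=n_t$ (child) with state $s^c=s_t$ and $n^p=n_k$ (parent) for some $k\in\{0,\dots,t-1\}$, and suppose the states of $n^p$ and $n^c$ differ in exactly $e$ variables. For a node $n=n_m$ in the sequence define $\alpha_{0:t}(n)=\frac{1}{t}\sum_{i\in\{0,\dots,t\},i\ne m}\delta(n,n_i)$ with $\delta(n_m,n_i)=\frac1L\sum_{l=0}^{L-1}\mathbf{1}_{s_m(v_l)\neq s_i(v_l)}$. Let $$\mu=\mu_{t-1}^{min}(n^c)=\min_{0\le l\le L-1}\frac{N_{t-1}^{v_l}(s^c)}{t},\qquad N_{t-1}^{v_l}(s^c)=|\{j\in\{0,\dots,t-1\}\mid s_j(v_l)=s^c(v_l)\}|.$$ Then $$\alpha_{0:t}(n^c)\le\alpha_{0:t}(n^p)+\frac{t-1}{t}\,\frac{e-2e\mu}{L}.$$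
   Context: $\delta$ is the normalized Hamming distance between node states; $\alpha_{0:t}(n)$ is the average normalized Hamming distance of a node of the sequence to all other nodes; $\mu_{t-1}^{min}(n^c)$ is the minimum, over all variables, of the fraction of the first $t$ nodes $n_0,\dots,n_{t-1}$ whose state agrees with the child's state on that variable. *)

theory Defs
  imports Complex_Main
begin

text \<open>A sequence of nodes n_0..n_t is represented by its states:
  s j l is the value of variable v_l at node n_j (j \<le> t, l < L).\<close>

definition hdist :: "nat \<Rightarrow> (nat \<Rightarrow> nat \<Rightarrow> bool) \<Rightarrow> nat \<Rightarrow> nat \<Rightarrow> real" where
  "hdist L s m i = (1 / real L) * (\<Sum>l<L. if s m l \<noteq> s i l then 1 else 0)"

definition alpha :: "nat \<Rightarrow> (nat \<Rightarrow> nat \<Rightarrow> bool) \<Rightarrow> nat \<Rightarrow> nat \<Rightarrow> real" where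
  "alpha L s t m = (1 / real t) * (\<Sum>i\<in>{0..t} - {m}. hdist L s m i)"

definition Ncount :: "(nat \<Rightarrow> nat \<Rightarrow> bool) \<Rightarrow> nat \<Rightarrow> nat \<Rightarrow> nat" where
  "Ncount s t l = card {j\<in>{0..t-1}. s j l = s t l}"

definition mu_min :: "nat \<Rightarrow> (nat \<Rightarrow> nat \<Rightarrow> bool) \<Rightarrow> nat \<Rightarrow> real" where
  "mu_min L s t = Min ((\<lambda>l. real (Ncount s t l) / real t) ` {0..<L})"

end

theory Submission
  imports Defs
begin

text \<open>Write \<open>N\<^sub>l\<close> for the number of earlier nodes agreeing with the child on \<open>v\<^sub>l\<close>.
  On a variable where parent and child agree, both disagree with the same earlier nodes; on each
  of the \<open>e\<close> variables where they differ, the parent disagrees with the \<open>N\<^sub>l\<close> earlier nodes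
  that agree with the child, while the child disagrees with the other \<open>t - N\<^sub>l\<close>. The parent's
  comparison with the child itself contributes \<open>e\<close>. Hence \<open>t L (\<alpha>(n\<^sup>c) - \<alpha>(n\<^sup>p))\<close> is the sum of
  \<open>t - 2 N\<^sub>l\<close> over the flipped variables, minus \<open>e\<close>, and \<open>N\<^sub>l \<ge> t \<mu>\<close> bounds each term.\<close>

lemma real_card_filter_eq_sum:
  assumes "finite A"
  shows "real (card {x\<in>A. P x}) = (\<Sum>x\<in>A. if P x then 1 else 0)"
  using assms by (simp add: sum.inter_filter[symmetric])

lemma hdist_eq_card: "hdist L s m i = real (card {l\<in>{..<L}. s m l \<noteq> s i l}) / real L"
  using real_card_filter_eq_sum[of "{..<L}" "\<lambda>l. s m l \<noteq> s i l"] by (simp add: hdist_def)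

lemma sum_hdist_eq_sum_card:
  assumes "finite A"
  shows "(\<Sum>i\<in>A. hdist L s m i) = (\<Sum>l<L. real (card {i\<in>A. s m l \<noteq> s i l})) / real L"
proof -
  have "(\<Sum>i\<in>A. hdist L s m i) = (\<Sum>i\<in>A. \<Sum>l<L. if s m l \<noteq> s i l then 1 else 0) / real L"
    by (simp add: hdist_def sum_divide_distrib)
  also have "\<dots> = (\<Sum>l<L. \<Sum>i\<in>A. if s m l \<noteq> s i l then 1 else 0) / real L"
    by (simp only: sum.swap[of _ A])
  also have "\<dots> = (\<Sum>l<L. real (card {i\<in>A. s m l \<noteq> s i l})) / real L"
    using assms by (simp add: real_card_filter_eq_sum)
  finally show ?thesis .
qed

lemma alpha_last:
  "alpha L s t t = (\<Sum>l<L. real (card {i\<in>{..<t}. s t l \<noteq> s i l})) / (real t * real L)"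
proof -
  have "{0..t} - {t} = {..<t}" by auto
  then show ?thesis by (simp add: alpha_def sum_hdist_eq_sum_card)
qed

lemma alpha_earlier:
  assumes "k < t"
  shows "alpha L s t k = ((\<Sum>l<L. real (card {i\<in>{..<t}. s k l \<noteq> s i l}))
                           + real (card {l\<in>{..<L}. s k l \<noteq> s t l})) / (real t * real L)"
proof -
  have "{0..t} - {k} = insert t ({..<t} - {k})" using assms by auto
  then have "(\<Sum>i\<in>{0..t} - {k}. hdist L s k i) = hdist L s k t + (\<Sum>i\<in>{..<t} - {k}. hdist L s k i)"
    by simp
  also have "(\<Sum>i\<in>{..<t} - {k}. hdist L s k i) = (\<Sum>i<t. hdist L s k i)"
    using assms by (simp add: sum_diff1 hdist_def)
  finally have "alpha L s t k = (hdist L s k t + (\<Sum>i<t. hdist L s k i)) / real t"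
    by (simp add: alpha_def)
  then show ?thesis
    unfolding sum_hdist_eq_sum_card[OF finite_lessThan] unfolding hdist_eq_card
    by (simp add: add_divide_distrib[symmetric] divide_divide_eq_left ac_simps)
qed

lemma card_agree_add_card_disagree:
  assumes "finite A"
  shows "card {i\<in>A. s i l = b} + card {i\<in>A. b \<noteq> s i l} = card A"
proof -
  have "card A = card ({i\<in>A. s i l = b} \<union> {i\<in>A. b \<noteq> s i l})"
    by (rule arg_cong[where f = card]) auto
  also have "\<dots> = card {i\<in>A. s i l = b} + card {i\<in>A. b \<noteq> s i l}"
    using assms by (intro card_Un_disjoint) auto
  finally show ?thesis by simp
qed

lemma card_disagree_gap:
  fixes s :: "'a \<Rightarrow> 'b \<Rightarrow> bool"
  assumes "finite A"
  shows "real (card {i\<in>A. s t l \<noteq> s i l}) - real (card {i\<in>A. s k l \<noteq> s i l})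
       = (if s k l \<noteq> s t l then real (card A) - 2 * real (card {i\<in>A. s i l = s t l}) else 0)"
proof (cases "s k l = s t l")
  case False
  have "{i\<in>A. s k l \<noteq> s i l} = {i\<in>A. s i l = s t l}" using False by auto
  with False card_agree_add_card_disagree[OF assms, of s l "s t l"] show ?thesis
    by (simp add: of_nat_add[symmetric] del: of_nat_add)
qed simp

lemma Ncount_eq_card_lessThan: "0 < t \<Longrightarrow> Ncount s t l = card {i\<in>{..<t}. s i l = s t l}"
  unfolding Ncount_def by (metis Suc_pred' atLeast0AtMost lessThan_Suc_atMost)

lemma mu_min_le_Ncount: "l < L \<Longrightarrow> mu_min L s t \<le> real (Ncount s t l) / real t"
  unfolding mu_min_def by (intro Min_le) auto

lemma mu_min_nonneg: "1 \<le> L \<Longrightarrow> 0 \<le> mu_min L s t"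
  unfolding mu_min_def by (subst Min_ge_iff) auto

lemma alpha_last_minus_earlier_le:
  assumes "1 \<le> t" and "k < t" and "e = card {l\<in>{..<L}. s k l \<noteq> s t l}"
  shows "alpha L s t t - alpha L s t k
           \<le> real e * (real t - 1 - 2 * real t * mu_min L s t) / (real t * real L)"
proof -
  define E where "E = {l\<in>{..<L}. s k l \<noteq> s t l}"
  define N where "N l = real (Ncount s t l)" for l
  have "0 < t" using assms(1) by simp
  have "alpha L s t t - alpha L s t k
      = ((\<Sum>l<L. real (card {i\<in>{..<t}. s t l \<noteq> s i l}) - real (card {i\<in>{..<t}. s k l \<noteq> s i l}))
          - real e) / (real t * real L)"
    using assms by (simp add: alpha_last alpha_earlier sum_subtractf diff_divide_distrib add_divide_distrib)
  also have "(\<Sum>l<L. real (card {i\<in>{..<t}. s t l \<noteq> s i l}) - real (card {i\<in>{..<t}. s k l \<noteq> s i l}))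
      = (\<Sum>l<L. if s k l \<noteq> s t l then real t - 2 * N l else 0)"
    unfolding card_disagree_gap[OF finite_lessThan] N_def Ncount_eq_card_lessThan[of t, OF \<open>0 < t\<close>] card_lessThan
    by simp
  also have "\<dots> = (\<Sum>l\<in>E. real t - 2 * N l)"
    unfolding E_def by (rule sum.inter_filter[symmetric]) simp
  also have "(\<Sum>l\<in>E. real t - 2 * N l) \<le> (\<Sum>l\<in>E. real t - 2 * (real t * mu_min L s t))"
  proof (rule sum_mono)
    fix l assume "l \<in> E"
    then have "mu_min L s t \<le> N l / real t" by (simp add: E_def N_def mu_min_le_Ncount)
    then show "real t - 2 * N l \<le> real t - 2 * (real t * mu_min L s t)"
      using assms(1) by (simp add: field_simps)
  qed
  also have "\<dots> = real e * (real t - 2 * real t * mu_min L s t)"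
    using assms(3) by (simp add: E_def)
  finally show ?thesis
    by (simp add: divide_right_mono algebra_simps)
qed

theorem theorem5:
  fixes L t k e :: nat and s :: "nat \<Rightarrow> nat \<Rightarrow> bool"
  assumes "L \<ge> 1" and "t \<ge> 1" and "k < t"
    and "e = card {l\<in>{0..<L}. s k l \<noteq> s t l}"
  shows "alpha L s t t \<le> alpha L s t k
           + (real (t - 1) / real t) * ((real e - 2 * real e * mu_min L s t) / real L)"
proof -
  let ?\<mu> = "mu_min L s t"
  have "e = card {l\<in>{..<L}. s k l \<noteq> s t l}" using assms(4) by (simp add: atLeast0LessThan)
  then have "alpha L s t t - alpha L s t k \<le> real e * (real t - 1 - 2 * real t * ?\<mu>) / (real t * real L)"
    by (rule alpha_last_minus_earlier_le[OF assms(2,3)])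
  also have "\<dots> \<le> real e * (real t - 1 - 2 * (real t - 1) * ?\<mu>) / (real t * real L)"
  proof -
    have "0 \<le> ?\<mu>" using assms(1) by (rule mu_min_nonneg)
    then have "real t - 1 - 2 * real t * ?\<mu> \<le> real t - 1 - 2 * (real t - 1) * ?\<mu>"
      by (simp add: algebra_simps)
    then show ?thesis by (intro divide_right_mono mult_left_mono) auto
  qed
  also have "\<dots> = (real (t - 1) / real t) * ((real e - 2 * real e * ?\<mu>) / real L)"
    using assms(2) by (simp add: of_nat_diff field_simps)
  finally show ?thesis by simp
qed

end
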